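(* Let $N=\{1,\ldots,n\}$, let $\mathscr{B}_1,\ldots,\mathscr{B}_p\in\mathfrak{B}^*(n)$, let $\mathscr{F}_k=\{v\in\mathscr{BG}(n):\sum_{S\in\mathscr{B}_k}\lambda^{\mathscr{B}_k}_Sv(S)=v(N)\}$ be the facet of $\mathscr{BG}(n)$ associated with $\mathscr{B}_k$, and consider the face $\mathscr{F}=\mathscr{F}_1\cap\cdots\cap\mathscr{F}_p$. Then every game in $\mathscr{F}$ has a core reduced to a single point if and only if the rank of the family of vectors $\{\mathbf{1}^S: S\in\mathscr{B}_1\cup\cdots\cup\mathscr{B}_p\}$ is $n$.
   Context: A game on $N$ is a map $v:2^N\to\mathbb{R}$ with $v(\varnothing)=0$. $\mathbf{1}^S\in\mathbb{R}^N$ is the characteristic vector of $S$. The core is $C(v)=\{x\in\mathbb{R}^N:\sum_{i\in S}x_i\geqslant v(S)\ \forall S,\ \sum_{i\in N}x_i=v(N)\}$. A collection $\mathscr{B}$ of nonempty subsets of $N$ is balanced if there exist positive weights $(\lambda_S)_{S\in\mathscr{B}}$ with $\sum_{S\in\mathscr{B},S\ni i}\lambda_S=1$ for all $i$; minimal balanced if no proper subcollection is balanced, with unique weights $\lambda^{\mathscr{B}}_S$. $\mathfrak{B}^*(n)$ is the set of minimal balanced collections other than $\{N\}$. $\mathscr{BG}(n)=\{v:\sum_{S\in\mathscr{B}}\lambda^{\mathscr{B}}_Sv(S)\leqslant v(N)\ \forall\mathscr{B}\in\mathfrak{B}^*(n)\}$. *)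

theory Defs
  imports "HOL-Analysis.Analysis"
begin

text \<open>Players: the finite type 'n (so N = UNIV, n = CARD('n)).
  A game is v :: 'n set \<Rightarrow> real with v {} = 0.\<close>

definition is_game :: "('n::finite set \<Rightarrow> real) \<Rightarrow> bool" where
  "is_game v \<longleftrightarrow> v {} = 0"

definition char_vec :: "'n::finite set \<Rightarrow> real ^ 'n" where
  "char_vec S = (\<chi> i. if i \<in> S then 1 else 0)"

definition core :: "('n::finite set \<Rightarrow> real) \<Rightarrow> (real ^ 'n) set" where
  "core v = {x. (\<forall>S. (\<Sum>i\<in>S. x $ i) \<ge> v S) \<and> (\<Sum>i\<in>UNIV. x $ i) = v UNIV}"

definition balanced_weights :: "'n::finite set set \<Rightarrow> ('n set \<Rightarrow> real) \<Rightarrow> bool" where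
  "balanced_weights B lam \<longleftrightarrow>
     (\<forall>S\<in>B. lam S > 0) \<and> (\<forall>i. (\<Sum>S\<in>{S\<in>B. i \<in> S}. lam S) = 1)"

definition balanced :: "'n::finite set set \<Rightarrow> bool" where
  "balanced B \<longleftrightarrow> (\<forall>S\<in>B. S \<noteq> {}) \<and> (\<exists>lam. balanced_weights B lam)"

definition minimal_balanced :: "'n::finite set set \<Rightarrow> bool" where
  "minimal_balanced B \<longleftrightarrow> balanced B \<and> (\<forall>C. C \<subset> B \<longrightarrow> \<not> balanced C)"

text \<open>The (unique) balancing weights of a minimal balanced collection,
  extended by 0 outside the collection.\<close>
definition bal_weight :: "'n::finite set set \<Rightarrow> 'n set \<Rightarrow> real" where
  "bal_weight B = (THE lam. balanced_weights B lam \<and> (\<forall>S. S \<notin> B \<longrightarrow> lam S = 0))"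

definition Bstar :: "'n::finite set set set" where
  "Bstar = {B. minimal_balanced B \<and> B \<noteq> {UNIV}}"

definition BG :: "('n::finite set \<Rightarrow> real) set" where
  "BG = {v. is_game v \<and> (\<forall>B\<in>Bstar. (\<Sum>S\<in>B. bal_weight B S * v S) \<le> v UNIV)}"

definition facet :: "'n::finite set set \<Rightarrow> ('n set \<Rightarrow> real) set" where
  "facet B = {v\<in>BG. (\<Sum>S\<in>B. bal_weight B S * v S) = v UNIV}"

end

theory Submission
  imports Defs
begin

text \<open>
  By the Bondareva--Shapley theorem every game of \<open>BG(n)\<close> has a nonempty core; here it is
  derived from Farkas' lemma, after reducing arbitrary balancing weights to minimal balanced
  collections (move along a line until a weight vanishes). If \<open>v\<close> lies on the facet of a minimal
  balanced \<open>B\<close>, the balancing identity \<open>\<Sum>S\<in>B. \<lambda>\<^sub>S x(S) = x(N) = v(N)\<close> forces \<open>x(S) = v(S)\<close> for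
  every core element \<open>x\<close> and every \<open>S \<in> B\<close>. So if the vectors \<open>1\<^sup>S\<close>, \<open>S \<in> B\<^sub>1 \<union> \<dots> \<union> B\<^sub>p\<close>, span
  \<open>\<real>\<^sup>n\<close>, the core of every game of the face is a single point. Otherwise some \<open>a \<noteq> 0\<close> is
  orthogonal to all of them, hence also to \<open>1\<^sup>N\<close>, which lies in their span; then the game
  \<open>S \<mapsto> min 0 a(S)\<close> lies on the face and has both \<open>0\<close> and \<open>a\<close> in its core.
\<close>

section \<open>Farkas' lemma\<close>

lemma convex_cone_hull_finite_imageE:
  fixes a :: "'i \<Rightarrow> 'a::real_vector"
  assumes "finite I" "x \<in> convex_cone hull (a ` I)"
  obtains c where "\<forall>i\<in>I. 0 \<le> c i" "x = (\<Sum>i\<in>I. c i *\<^sub>R a i)"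
proof -
  define K where "K = {\<Sum>i\<in>I. c i *\<^sub>R a i | c. \<forall>i\<in>I. 0 \<le> c i}"
  have "a j \<in> K" if "j \<in> I" for j
  proof -
    have "(\<Sum>i\<in>I. (if i = j then 1 else 0) *\<^sub>R a i) = (\<Sum>i\<in>I. if i = j then a i else 0)"
      by (intro sum.cong) auto
    also have "\<dots> = a j" using assms(1) that by simp
    finally have "(\<Sum>i\<in>I. (if i = j then 1 else 0) *\<^sub>R a i) = a j" .
    then show ?thesis unfolding K_def by (intro CollectI exI[of _ "\<lambda>i. if i = j then 1 else 0"]) auto
  qed
  moreover have "convex_cone K"
    unfolding convex_cone_iff
  proof (intro conjI ballI allI impI)
    show "0 \<in> K" unfolding K_def by (intro CollectI exI[of _ "\<lambda>i. 0"]) simp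
  next
    fix x y assume "x \<in> K" "y \<in> K"
    then obtain c d where "\<forall>i\<in>I. 0 \<le> c i" "x = (\<Sum>i\<in>I. c i *\<^sub>R a i)"
      "\<forall>i\<in>I. 0 \<le> d i" "y = (\<Sum>i\<in>I. d i *\<^sub>R a i)" unfolding K_def by blast
    then show "x + y \<in> K" unfolding K_def
      by (intro CollectI exI[of _ "\<lambda>i. c i + d i"]) (simp add: scaleR_add_left sum.distrib)
  next
    fix x and t :: real assume "x \<in> K" "0 \<le> t"
    then obtain c where "\<forall>i\<in>I. 0 \<le> c i" "x = (\<Sum>i\<in>I. c i *\<^sub>R a i)" unfolding K_def by blast
    then show "t *\<^sub>R x \<in> K" unfolding K_def using \<open>0 \<le> t\<close>
      by (intro CollectI exI[of _ "\<lambda>i. t * c i"]) (simp add: scaleR_sum_right)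
  qed
  ultimately have "convex_cone hull (a ` I) \<subseteq> K" by (intro hull_minimal) auto
  then show ?thesis using assms(2) that unfolding K_def by blast
qed

lemma farkas_alternative:
  fixes a :: "'i \<Rightarrow> 'a::euclidean_space"
  assumes "finite I"
  shows "(\<exists>c. (\<forall>i\<in>I. 0 \<le> c i) \<and> b = (\<Sum>i\<in>I. c i *\<^sub>R a i))
    \<or> (\<exists>z. (\<forall>i\<in>I. 0 \<le> z \<bullet> a i) \<and> z \<bullet> b < 0)"
proof (cases "b \<in> convex_cone hull (a ` I)")
  case True
  then show ?thesis using convex_cone_hull_finite_imageE[OF assms] by metis
next
  case False
  define K where "K = convex_cone hull (a ` I)"
  have "closed K" unfolding K_def using assms by (simp add: closed_convex_cone_hull)
  then obtain z \<beta> where z: "z \<bullet> b < \<beta>" "\<forall>x\<in>K. \<beta> < z \<bullet> x"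
    using separating_hyperplane_closed_point[of K b] False convex_convex_cone_hull
    unfolding K_def by blast
  have "\<beta> < 0" using z(2) convex_cone_hull_contains_0 unfolding K_def by fastforce
  have "0 \<le> z \<bullet> x" if "x \<in> K" for x
  proof (rule ccontr)
    assume "\<not> 0 \<le> z \<bullet> x"
    then have "(\<beta> / (z \<bullet> x)) *\<^sub>R x \<in> K" and "z \<bullet> ((\<beta> / (z \<bullet> x)) *\<^sub>R x) = \<beta>"
      using \<open>\<beta> < 0\<close> that unfolding K_def
      by (auto intro!: convex_cone_hull_mul simp: divide_nonpos_neg less_imp_le)
    then show False using z(2) by fastforce
  qed
  then have "\<forall>i\<in>I. 0 \<le> z \<bullet> a i" unfolding K_def by (simp add: hull_inc)
  then show ?thesis using z(1) \<open>\<beta> < 0\<close> by auto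
qed

section \<open>Balancing weight vectors\<close>

text \<open>Balancing weights of a collection, extended by zero to all coalitions; the collection is
  recovered as the support.\<close>

definition balancing :: "('n::finite set \<Rightarrow> real) \<Rightarrow> bool" where
  "balancing w \<longleftrightarrow> (\<forall>S. 0 \<le> w S) \<and> w {} = 0 \<and> (\<forall>i. sum w {S. i \<in> S} = 1)"

lemma nonneg_eq_0_if_containing_sum_eq_0:
  fixes y :: "'n::finite set \<Rightarrow> real"
  assumes "\<forall>S. 0 \<le> y S" "sum y {S. i \<in> S} = 0" "i \<in> S"
  shows "y S = 0"
  using sum_nonneg_eq_0_iff[of "{S. i \<in> S}" y] assms by auto

lemma balanced_weights_iff_balancing:
  assumes "{} \<notin> B" "\<forall>S. S \<notin> B \<longrightarrow> w S = 0"
  shows "balanced_weights B w \<longleftrightarrow> balancing w \<and> {S. w S \<noteq> 0} = B"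
proof -
  have "sum w {S\<in>B. i \<in> S} = sum w {S. i \<in> S}" for i
    by (rule sum.mono_neutral_left) (use assms(2) in auto)
  then show ?thesis
    using assms unfolding balanced_weights_def balancing_def
    by (auto simp: order_le_less)
qed

lemma balancing_imp_balanced_support:
  assumes "balancing w"
  shows "balanced {S. w S \<noteq> 0}"
proof -
  have e: "{} \<notin> {S. w S \<noteq> 0}" using assms by (simp add: balancing_def)
  have z: "\<forall>S. S \<notin> {S. w S \<noteq> 0} \<longrightarrow> w S = 0" by simp
  have "balanced_weights {S. w S \<noteq> 0} w"
    using balanced_weights_iff_balancing[OF e z] assms by blast
  then show ?thesis unfolding balanced_def using e by blast
qed

lemma balanced_balancingE:
  assumes "balanced C"
  obtains w where "balancing w" "{S. w S \<noteq> 0} = C"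
proof -
  obtain lam where lam: "balanced_weights C lam" and "{} \<notin> C"
    using assms unfolding balanced_def by blast
  define w where "w S = (if S \<in> C then lam S else 0)" for S
  have "balanced_weights C w"
    using lam unfolding balanced_weights_def w_def by simp
  then have "balancing w \<and> {S. w S \<noteq> 0} = C"
    using balanced_weights_iff_balancing[OF \<open>{} \<notin> C\<close>, of w] by (simp add: w_def)
  then show ?thesis using that by blast
qed

lemma nonneg_add_ray_shrinks_support:
  fixes mu d :: "'a::finite \<Rightarrow> real"
  assumes nonneg: "\<forall>x. 0 \<le> mu x" and supp: "\<forall>x. mu x = 0 \<longrightarrow> d x = 0" and neg: "\<exists>x. d x < 0"
  obtains t where "0 \<le> t" "\<forall>x. 0 \<le> mu x + t * d x" "{x. mu x + t * d x \<noteq> 0} \<subset> {x. mu x \<noteq> 0}"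
proof -
  define D where "D = {x. d x < 0}"
  define t where "t = Min ((\<lambda>x. mu x / - d x) ` D)"
  have "D \<noteq> {}" using neg by (simp add: D_def)
  then have "t \<in> (\<lambda>x. mu x / - d x) ` D"
    unfolding t_def by (intro Min_in) (simp_all add: D_def)
  then obtain x0 where x0: "x0 \<in> D" "t = mu x0 / - d x0" by blast
  have t_le: "t \<le> mu x / - d x" if "x \<in> D" for x
    using that by (simp add: t_def)
  have "0 \<le> t" using x0 nonneg by (simp add: D_def divide_nonneg_neg less_imp_le)
  have nonneg_ray: "0 \<le> mu x + t * d x" for x
  proof (cases "x \<in> D")
    case True
    then have "0 < - d x" by (simp add: D_def)
    then have "t * - d x \<le> mu x" using t_le[OF True] by (simp only: pos_le_divide_eq)
    then show ?thesis by simp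
  next
    case False
    then show ?thesis using nonneg \<open>0 \<le> t\<close> by (simp add: D_def)
  qed
  have "mu x0 + t * d x0 = 0" "mu x0 \<noteq> 0"
    using x0 supp by (auto simp: D_def)
  then have "{x. mu x + t * d x \<noteq> 0} \<subset> {x. mu x \<noteq> 0}"
    using supp by auto
  then show ?thesis using that \<open>0 \<le> t\<close> nonneg_ray by blast
qed

lemma balancing_shrink_support:
  assumes mu: "balancing mu" and nu: "balancing nu"
    and supp: "{S. nu S \<noteq> 0} \<subseteq> {S. mu S \<noteq> 0}" and "mu \<noteq> nu"
  obtains t where "0 \<le> t" "balancing (\<lambda>S. mu S + t * (mu S - nu S))"
    "{S. mu S + t * (mu S - nu S) \<noteq> 0} \<subset> {S. mu S \<noteq> 0}"
proof -
  define d where "d S = mu S - nu S" for S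
  have d_empty: "d {} = 0" using mu nu by (simp add: balancing_def d_def)
  have sum_d: "sum d {S. i \<in> S} = 0" for i
    using mu nu by (simp add: balancing_def d_def sum_subtractf)
  have neg_d: "\<exists>S. d S < 0"
  proof (rule ccontr)
    assume "\<not> (\<exists>S. d S < 0)"
    then have d_nonneg: "\<forall>S. 0 \<le> d S" by (simp add: not_less)
    have "d S = 0" for S
    proof (cases "S = {}")
      case False
      then obtain i where "i \<in> S" by blast
      then show ?thesis using nonneg_eq_0_if_containing_sum_eq_0[OF d_nonneg sum_d] by blast
    qed (simp add: d_empty)
    then show False using \<open>mu \<noteq> nu\<close> by (auto simp: d_def)
  qed
  have supp_d: "\<forall>S. mu S = 0 \<longrightarrow> d S = 0" using supp by (auto simp: d_def)
  have mu_nonneg: "\<forall>S. 0 \<le> mu S" using mu by (simp add: balancing_def)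
  obtain t where t: "0 \<le> t" "\<forall>S. 0 \<le> mu S + t * d S"
    "{S. mu S + t * d S \<noteq> 0} \<subset> {S. mu S \<noteq> 0}"
    using nonneg_add_ray_shrinks_support[OF mu_nonneg supp_d neg_d] by blast
  have "sum (\<lambda>S. mu S + t * d S) {S. i \<in> S} = 1" for i
    using mu sum_d by (simp add: balancing_def sum.distrib flip: sum_distrib_left)
  then have "balancing (\<lambda>S. mu S + t * d S)"
    using t(2) mu d_empty by (simp add: balancing_def)
  then show ?thesis using t(1,3) unfolding d_def by (intro that)
qed

lemma minimal_balanced_balancing_unique:
  assumes "minimal_balanced B"
    and "balancing w1" "{S. w1 S \<noteq> 0} = B"
    and "balancing w2" "{S. w2 S \<noteq> 0} = B"
  shows "w1 = w2"
proof (rule ccontr)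
  assume "w1 \<noteq> w2"
  have "{S. w2 S \<noteq> 0} \<subseteq> {S. w1 S \<noteq> 0}" using assms(3,5) by simp
  then obtain t where t: "0 \<le> t" "balancing (\<lambda>S. w1 S + t * (w1 S - w2 S))"
    "{S. w1 S + t * (w1 S - w2 S) \<noteq> 0} \<subset> {S. w1 S \<noteq> 0}"
    by (rule balancing_shrink_support[OF assms(2,4) _ \<open>w1 \<noteq> w2\<close>])
  have "balanced {S. w1 S + t * (w1 S - w2 S) \<noteq> 0}"
    using balancing_imp_balanced_support[OF t(2)] by simp
  moreover have "{S. w1 S + t * (w1 S - w2 S) \<noteq> 0} \<subset> B" using t(3) assms(3) by simp
  ultimately show False using assms(1) by (simp add: minimal_balanced_def)
qed

lemma bal_weight_balancing:
  assumes "minimal_balanced B"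
  shows "balancing (bal_weight B)" "{S. bal_weight B S \<noteq> 0} = B"
proof -
  have "{} \<notin> B" using assms by (auto simp: minimal_balanced_def balanced_def)
  have "balanced B" using assms by (simp add: minimal_balanced_def)
  then obtain w where "balancing w" "{S. w S \<noteq> 0} = B" by (rule balanced_balancingE)
  then have w: "balancing w \<and> {S. w S \<noteq> 0} = B" by blast
  have unique: "l = w" if "balancing l \<and> {S. l S \<noteq> 0} = B" for l
    using minimal_balanced_balancing_unique[OF assms] that w by blast
  have char: "balanced_weights B l \<and> (\<forall>S. S \<notin> B \<longrightarrow> l S = 0)
      \<longleftrightarrow> balancing l \<and> {S. l S \<noteq> 0} = B" for l
    using balanced_weights_iff_balancing[OF \<open>{} \<notin> B\<close>] by blast
  have "balancing (bal_weight B) \<and> {S. bal_weight B S \<noteq> 0} = B"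
    unfolding bal_weight_def char
    by (rule theI[where P = "\<lambda>l. balancing l \<and> {S. l S \<noteq> 0} = B", OF w unique])
  then show "balancing (bal_weight B)" "{S. bal_weight B S \<noteq> 0} = B" by blast+
qed

lemma bal_weight_unique:
  assumes "minimal_balanced B" "balancing w" "{S. w S \<noteq> 0} = B"
  shows "bal_weight B = w"
  using minimal_balanced_balancing_unique[OF assms(1) bal_weight_balancing[OF assms(1)] assms(2,3)] .

lemma bal_weight_pos:
  assumes "minimal_balanced B" "S \<in> B"
  shows "0 < bal_weight B S"
proof -
  have "bal_weight B S \<noteq> 0" using bal_weight_balancing(2)[OF assms(1)] assms(2) by blast
  moreover have "0 \<le> bal_weight B S" using bal_weight_balancing(1)[OF assms(1)] by (simp add: balancing_def)
  ultimately show ?thesis by simp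
qed

lemma balancing_value_le_minimal_balanced:
  fixes v :: "'n::finite set \<Rightarrow> real"
  assumes "balancing mu"
  shows "\<exists>B. minimal_balanced B \<and> (\<Sum>S\<in>UNIV. mu S * v S) \<le> (\<Sum>S\<in>B. bal_weight B S * v S)"
  using assms
proof (induction "card {S. mu S \<noteq> 0}" arbitrary: mu rule: less_induct)
  case less
  define B where "B = {S. mu S \<noteq> 0}"
  show ?case
  proof (cases "minimal_balanced B")
    case True
    then have "bal_weight B = mu" using bal_weight_unique less.prems B_def by blast
    moreover have "(\<Sum>S\<in>UNIV. mu S * v S) = (\<Sum>S\<in>B. mu S * v S)"
      by (rule sum.mono_neutral_right) (auto simp: B_def)
    ultimately show ?thesis using True by auto
  next
    case False
    then obtain C where "C \<subset> B" "balanced C"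
      using balancing_imp_balanced_support[OF less.prems] by (auto simp: minimal_balanced_def B_def)
    obtain nu where nu: "balancing nu" "{S. nu S \<noteq> 0} = C"
      by (rule balanced_balancingE[OF \<open>balanced C\<close>])
    \<comment> \<open>Either \<open>nu\<close> is at least as good as \<open>mu\<close>, or moving from \<open>mu\<close> away from \<open>nu\<close> does not
      decrease the value; both vectors have smaller support than \<open>mu\<close>.\<close>
    show ?thesis
    proof (cases "(\<Sum>S\<in>UNIV. mu S * v S) \<le> (\<Sum>S\<in>UNIV. nu S * v S)")
      case True
      have "card {S. nu S \<noteq> 0} < card B" using \<open>C \<subset> B\<close> nu(2) by (simp add: psubset_card_mono)
      then show ?thesis using less.hyps[OF _ nu(1)] True B_def by (meson order_trans)
    next
      case False
      have "{S. nu S \<noteq> 0} \<subseteq> {S. mu S \<noteq> 0}" using \<open>C \<subset> B\<close> nu(2) B_def by auto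
      moreover have "mu \<noteq> nu" using \<open>C \<subset> B\<close> nu(2) B_def by auto
      ultimately obtain t where t: "0 \<le> t" "balancing (\<lambda>S. mu S + t * (mu S - nu S))"
        "{S. mu S + t * (mu S - nu S) \<noteq> 0} \<subset> B"
        unfolding B_def by (rule balancing_shrink_support[OF less.prems nu(1)])
      have "(\<Sum>S\<in>UNIV. (mu S + t * (mu S - nu S)) * v S)
          = (\<Sum>S\<in>UNIV. mu S * v S) + t * ((\<Sum>S\<in>UNIV. mu S * v S) - (\<Sum>S\<in>UNIV. nu S * v S))"
        by (simp add: algebra_simps sum.distrib sum_subtractf sum_distrib_left)
      also have "\<dots> \<ge> (\<Sum>S\<in>UNIV. mu S * v S)" using t(1) False by simp
      finally show ?thesis
        using less.hyps[OF _ t(2)] psubset_card_mono[OF _ t(3)] B_def by (meson finite order_trans)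
    qed
  qed
qed

lemma BG_minimal_balanced_le:
  assumes "v \<in> BG" "minimal_balanced B"
  shows "(\<Sum>S\<in>B. bal_weight B S * v S) \<le> v UNIV"
proof (cases "B = {UNIV}")
  case True
  have "sum (bal_weight B) {S. i \<in> S} = sum (bal_weight B) {UNIV}" for i
    by (rule sum.mono_neutral_right) (use bal_weight_balancing(2)[OF assms(2)] True in auto)
  then have "bal_weight B UNIV = 1"
    using bal_weight_balancing(1)[OF assms(2)] by (simp add: balancing_def)
  then show ?thesis using True by simp
next
  case False
  then show ?thesis using assms by (simp add: BG_def Bstar_def)
qed

lemma BG_weighted_sum_le:
  assumes "v \<in> BG" and y_nonneg: "\<forall>S. 0 \<le> y S" and y_sum: "\<forall>i. sum y {S. i \<in> S} = t"
  shows "(\<Sum>S\<in>UNIV. y S * v S) \<le> t * v UNIV"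
proof -
  have v_empty: "v {} = 0" using assms(1) by (simp add: BG_def is_game_def)
  have "0 \<le> t" using y_sum y_nonneg by (metis sum_nonneg)
  show ?thesis
  proof (cases "t = 0")
    case True
    have "y S * v S = 0" for S
    proof (cases "S = {}")
      case False
      then obtain i where "i \<in> S" by blast
      then show ?thesis using nonneg_eq_0_if_containing_sum_eq_0[OF y_nonneg _ \<open>i \<in> S\<close>] y_sum True by simp
    qed (simp add: v_empty)
    then show ?thesis using True by (simp add: sum.neutral)
  next
    case False
    define mu where "mu S = (if S = {} then 0 else y S / t)" for S
    have "sum mu {S. i \<in> S} = sum y {S. i \<in> S} / t" for i
      unfolding sum_divide_distrib by (rule sum.cong) (auto simp: mu_def)
    then have "balancing mu"
      using y_nonneg y_sum \<open>0 \<le> t\<close> False by (simp add: balancing_def mu_def)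
    then obtain B where "minimal_balanced B"
      "(\<Sum>S\<in>UNIV. mu S * v S) \<le> (\<Sum>S\<in>B. bal_weight B S * v S)"
      using balancing_value_le_minimal_balanced by blast
    then have "(\<Sum>S\<in>UNIV. mu S * v S) \<le> v UNIV" using BG_minimal_balanced_le assms(1) by fastforce
    moreover have "(\<Sum>S\<in>UNIV. mu S * v S) = (\<Sum>S\<in>UNIV. y S * v S) / t"
      unfolding sum_divide_distrib by (rule sum.cong) (auto simp: mu_def v_empty)
    ultimately show ?thesis using \<open>0 \<le> t\<close> False by (simp add: divide_le_eq mult.commute)
  qed
qed

section \<open>Nonemptiness of the core on \<open>BG(n)\<close>\<close>

lemma inner_char_vec: "x \<bullet> char_vec S = (\<Sum>i\<in>S. x $ i)"
proof -
  have "x \<bullet> char_vec S = (\<Sum>i\<in>UNIV. if i \<in> S then x $ i else 0)"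
    by (simp add: inner_vec_def char_vec_def if_distrib cong: if_cong)
  also have "\<dots> = (\<Sum>i\<in>S. x $ i)" by (simp add: sum.If_cases)
  finally show ?thesis .
qed

lemma core_iff_inner:
  "x \<in> core v \<longleftrightarrow> (\<forall>S. v S \<le> x \<bullet> char_vec S) \<and> x \<bullet> char_vec UNIV = v UNIV"
  by (simp add: core_def inner_char_vec)

lemma sum_scaleR_char_vec_nth:
  fixes y :: "'n::finite set \<Rightarrow> real"
  shows "(\<Sum>S\<in>UNIV. y S *\<^sub>R char_vec S) $ i = sum y {S. i \<in> S}"
  by (simp add: char_vec_def sum.If_cases if_distrib cong: if_cong)

lemma balancing_sum_char_vec:
  assumes "balancing w"
  shows "(\<Sum>S\<in>UNIV. w S *\<^sub>R char_vec S) = char_vec UNIV"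
  unfolding vec_eq_iff sum_scaleR_char_vec_nth using assms by (simp add: balancing_def char_vec_def)

lemma sum_UNIV_option:
  fixes f :: "'a::finite option \<Rightarrow> 'b::comm_monoid_add"
  shows "(\<Sum>i\<in>UNIV. f i) = f None + (\<Sum>x\<in>UNIV. f (Some x))"
  unfolding UNIV_option_conv by (subst sum.insert) (auto simp: sum.reindex)

lemma scaled_certificate_in_core:
  assumes "\<alpha> < 0"
    and "\<And>S. 0 \<le> w \<bullet> char_vec S + \<alpha> * v S" and "0 \<le> - (w \<bullet> char_vec UNIV) - \<alpha> * v UNIV"
  shows "(- 1 / \<alpha>) *\<^sub>R w \<in> core v"
proof -
  have "v S \<le> ((- 1 / \<alpha>) *\<^sub>R w) \<bullet> char_vec S" for S
    using assms(1) assms(2)[of S] by (simp add: field_simps)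
  moreover have "((- 1 / \<alpha>) *\<^sub>R w) \<bullet> char_vec UNIV \<le> v UNIV"
    using assms(1,3) by (simp add: field_simps)
  ultimately show ?thesis by (auto simp: core_iff_inner intro: antisym)
qed

lemma BG_core_nonempty:
  fixes v :: "'n::finite set \<Rightarrow> real"
  assumes "v \<in> BG"
  shows "core v \<noteq> {}"
proof -
  \<comment> \<open>Farkas' lemma for the homogenised system \<open>x(S) \<ge> v(S)\<close>, \<open>x(N) \<le> v(N)\<close>.\<close>
  define a :: "'n set option \<Rightarrow> (real ^ 'n) \<times> real" where
    "a = case_option (- char_vec UNIV, - v UNIV) (\<lambda>S. (char_vec S, v S))"
  consider c where "\<forall>i. 0 \<le> c i" "(0, 1) = (\<Sum>i\<in>UNIV. c i *\<^sub>R a i)"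
    | z where "\<forall>i. 0 \<le> z \<bullet> a i" "z \<bullet> (0, 1) < 0"
    using farkas_alternative[where I = UNIV and a = a and b = "(0, 1)"] by auto
  then show ?thesis
  proof cases
    case (1 c)
    define y where "y S = c (Some S)" for S
    have eq: "(0, 1) = (\<Sum>S\<in>UNIV. (y S *\<^sub>R char_vec S, y S * v S)) - c None *\<^sub>R (char_vec UNIV, v UNIV)"
      using 1(2) by (simp add: sum_UNIV_option a_def y_def)
    have cover: "(\<Sum>S\<in>UNIV. y S *\<^sub>R char_vec S) = c None *\<^sub>R char_vec UNIV"
      using arg_cong[OF eq, of fst] by (simp add: fst_sum)
    have payoff: "(\<Sum>S\<in>UNIV. y S * v S) = 1 + c None * v UNIV"
      using arg_cong[OF eq, of snd] by (simp add: snd_sum)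
    have "sum y {S. i \<in> S} = c None" for i
      unfolding sum_scaleR_char_vec_nth[symmetric] cover by (simp add: char_vec_def)
    then have "(\<Sum>S\<in>UNIV. y S * v S) \<le> c None * v UNIV"
      using 1(1) by (intro BG_weighted_sum_le[OF assms]) (auto simp: y_def)
    then show ?thesis using payoff by simp
  next
    case (2 z)
    obtain w \<alpha> where z: "z = (w, \<alpha>)" by (cases z)
    have "\<alpha> < 0" using 2(2) z by simp
    moreover have "0 \<le> w \<bullet> char_vec S + \<alpha> * v S" for S
      using 2(1)[rule_format, of "Some S"] z by (simp add: a_def)
    moreover have "0 \<le> - (w \<bullet> char_vec UNIV) - \<alpha> * v UNIV"
      using 2(1)[rule_format, of None] z by (simp add: a_def)
    ultimately show ?thesis using scaled_certificate_in_core[of \<alpha> w v] by blast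
  qed
qed

section \<open>Faces of \<open>BG(n)\<close>\<close>

lemma bal_weight_sum_char_vec:
  assumes "minimal_balanced B"
  shows "(\<Sum>S\<in>B. bal_weight B S *\<^sub>R char_vec S) = char_vec UNIV"
proof -
  have "(\<Sum>S\<in>B. bal_weight B S *\<^sub>R char_vec S) = (\<Sum>S\<in>UNIV. bal_weight B S *\<^sub>R char_vec S)"
    by (rule sum.mono_neutral_left) (use bal_weight_balancing(2)[OF assms] in auto)
  then show ?thesis using balancing_sum_char_vec bal_weight_balancing(1)[OF assms] by simp
qed

lemma char_vec_UNIV_in_span:
  assumes "minimal_balanced B"
  shows "char_vec UNIV \<in> span (char_vec ` B)"
  unfolding bal_weight_sum_char_vec[OF assms, symmetric]
  by (intro span_sum span_mul span_base) auto

lemma facet_core_tight: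
  assumes B: "minimal_balanced B" and "v \<in> facet B" and x: "x \<in> core v" and "S \<in> B"
  shows "x \<bullet> char_vec S = v S"
proof -
  have "(\<Sum>S\<in>B. bal_weight B S * (x \<bullet> char_vec S - v S))
      = x \<bullet> (\<Sum>S\<in>B. bal_weight B S *\<^sub>R char_vec S) - (\<Sum>S\<in>B. bal_weight B S * v S)"
    by (simp add: right_diff_distrib sum_subtractf inner_sum_right)
  also have "\<dots> = 0"
    using \<open>v \<in> facet B\<close> x by (simp add: bal_weight_sum_char_vec[OF B] facet_def core_iff_inner)
  moreover have "0 \<le> bal_weight B S * (x \<bullet> char_vec S - v S)" if "S \<in> B" for S
    using x bal_weight_pos[OF B that] by (simp add: core_iff_inner)
  ultimately have "\<forall>S\<in>B. bal_weight B S * (x \<bullet> char_vec S - v S) = 0"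
    by (simp add: sum_nonneg_eq_0_iff)
  then show ?thesis using bal_weight_pos[OF B \<open>S \<in> B\<close>] \<open>S \<in> B\<close> by fastforce
qed

lemma core_eq_singleton_if_tight_span:
  assumes "x \<in> core v" and "span (char_vec ` T) = UNIV"
    and tight: "\<And>y S. y \<in> core v \<Longrightarrow> S \<in> T \<Longrightarrow> y \<bullet> char_vec S = v S"
  shows "core v = {x}"
proof -
  have "y = x" if "y \<in> core v" for y
  proof -
    have orth: "orthogonal (x - y) (char_vec S)" if "S \<in> T" for S
      using tight[OF \<open>x \<in> core v\<close> that] tight[OF \<open>y \<in> core v\<close> that]
      by (simp add: orthogonal_def inner_diff_left)
    have "orthogonal (x - y) (x - y)"
    proof (rule orthogonal_to_span)
      show "x - y \<in> span (char_vec ` T)" using assms(2) by simp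
    qed (use orth in blast)
    then show ?thesis by (simp add: orthogonal_def)
  qed
  then show ?thesis using assms(1) by blast
qed

definition nonpos_additive_game :: "real ^ 'n::finite \<Rightarrow> 'n set \<Rightarrow> real" where
  "nonpos_additive_game a S = min 0 (a \<bullet> char_vec S)"

lemma nonpos_additive_game_in_BG:
  fixes a :: "real ^ 'n::finite"
  assumes "a \<bullet> char_vec UNIV = 0"
  shows "nonpos_additive_game a \<in> BG"
  unfolding BG_def is_game_def
proof (intro CollectI conjI ballI)
  show "nonpos_additive_game a {} = 0"
    by (simp add: nonpos_additive_game_def inner_char_vec)
next
  fix B :: "'n set set" assume "B \<in> Bstar"
  then have "0 \<le> bal_weight B S" for S
    using bal_weight_balancing(1)[of B] \<open>B \<in> Bstar\<close> by (simp add: Bstar_def balancing_def)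
  then show "(\<Sum>S\<in>B. bal_weight B S * nonpos_additive_game a S) \<le> nonpos_additive_game a UNIV"
    using assms by (auto simp: nonpos_additive_game_def intro!: sum_nonpos mult_nonneg_nonpos)
qed

lemma nonpos_additive_game_in_facet:
  assumes "a \<bullet> char_vec UNIV = 0" "\<forall>S\<in>B. a \<bullet> char_vec S = 0"
  shows "nonpos_additive_game a \<in> facet B"
  using nonpos_additive_game_in_BG[OF assms(1)] assms
  by (simp add: facet_def nonpos_additive_game_def)

lemma zero_and_vector_in_core_nonpos_additive_game:
  assumes "a \<bullet> char_vec UNIV = 0"
  shows "0 \<in> core (nonpos_additive_game a)" "a \<in> core (nonpos_additive_game a)"
  using assms by (auto simp: core_iff_inner nonpos_additive_game_def)

lemma span_char_vec_eq_UNIV_if_cores_singleton: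
  assumes B: "\<forall>B\<in>Cs. minimal_balanced B" and "B0 \<in> Cs"
    and unique: "\<forall>v \<in> (\<Inter>B\<in>Cs. facet B). \<exists>x. core v = {x}"
  shows "span (char_vec ` \<Union>Cs) = UNIV"
proof (rule ccontr)
  assume "span (char_vec ` \<Union>Cs) \<noteq> UNIV"
  then obtain a where "a \<noteq> 0" and a: "\<forall>z\<in>span (char_vec ` \<Union>Cs). a \<bullet> z = 0"
    using span_not_UNIV_orthogonal by blast
  have "span (char_vec ` B0) \<subseteq> span (char_vec ` \<Union>Cs)"
    using \<open>B0 \<in> Cs\<close> by (intro span_mono) blast
  then have N: "a \<bullet> char_vec UNIV = 0"
    using a char_vec_UNIV_in_span B \<open>B0 \<in> Cs\<close> by blast
  have "a \<bullet> char_vec S = 0" if "S \<in> \<Union>Cs" for S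
    using a span_base[of "char_vec S" "char_vec ` \<Union>Cs"] that by simp
  then have "nonpos_additive_game a \<in> facet B" if "B \<in> Cs" for B
    using that by (intro nonpos_additive_game_in_facet[OF N]) blast
  then obtain x where "core (nonpos_additive_game a) = {x}" using unique by blast
  then show False using zero_and_vector_in_core_nonpos_additive_game[OF N] \<open>a \<noteq> 0\<close> by simp
qed

lemma core_singleton_if_span_char_vec_eq_UNIV:
  assumes B: "\<forall>B\<in>Cs. minimal_balanced B" and "B0 \<in> Cs"
    and span: "span (char_vec ` \<Union>Cs) = UNIV" and v: "v \<in> (\<Inter>B\<in>Cs. facet B)"
  shows "\<exists>x. core v = {x}"
proof -
  have "v \<in> BG" using v \<open>B0 \<in> Cs\<close> by (auto simp: facet_def)
  then obtain x where "x \<in> core v" using BG_core_nonempty by blast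
  moreover have "y \<bullet> char_vec S = v S" if "y \<in> core v" "S \<in> \<Union>Cs" for y S
  proof -
    obtain B where "B \<in> Cs" "S \<in> B" using \<open>S \<in> \<Union>Cs\<close> by blast
    then have "minimal_balanced B" "v \<in> facet B" using B v by auto
    then show ?thesis using facet_core_tight \<open>y \<in> core v\<close> \<open>S \<in> B\<close> by blast
  qed
  ultimately have "core v = {x}" by (rule core_eq_singleton_if_tight_span[OF _ span])
  then show ?thesis ..
qed

theorem theorem18:
  fixes Bs :: "nat \<Rightarrow> 'n::finite set set" and p :: nat
  assumes "p \<ge> 1"
    and "\<forall>k\<in>{1..p}. Bs k \<in> Bstar"
  shows "(\<forall>v \<in> (\<Inter>k\<in>{1..p}. facet (Bs k)). \<exists>x. core v = {x})
     \<longleftrightarrow> dim (char_vec ` (\<Union>k\<in>{1..p}. Bs k)) = CARD('n)"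
proof -
  have B: "\<forall>B\<in>Bs ` {1..p}. minimal_balanced B" using assms(2) by (simp add: Bstar_def)
  have B1: "Bs 1 \<in> Bs ` {1..p}" using assms(1) by simp
  have facets: "(\<Inter>k\<in>{1..p}. facet (Bs k)) = (\<Inter>B\<in>Bs ` {1..p}. facet B)"
    by (simp add: image_image)
  have rank: "dim (char_vec ` (\<Union>k\<in>{1..p}. Bs k)) = CARD('n)
      \<longleftrightarrow> span (char_vec ` (\<Union>k\<in>{1..p}. Bs k)) = UNIV"
    by (metis DIM_cart DIM_real dim_eq_full mult.right_neutral)
  show ?thesis
    unfolding facets rank
  proof
    assume "\<forall>v \<in> (\<Inter>B\<in>Bs ` {1..p}. facet B). \<exists>x. core v = {x}"
    then show "span (char_vec ` (\<Union>k\<in>{1..p}. Bs k)) = UNIV"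
      by (rule span_char_vec_eq_UNIV_if_cores_singleton[OF B B1])
  next
    assume "span (char_vec ` (\<Union>k\<in>{1..p}. Bs k)) = UNIV"
    then show "\<forall>v \<in> (\<Inter>B\<in>Bs ` {1..p}. facet B). \<exists>x. core v = {x}"
      using core_singleton_if_span_char_vec_eq_UNIV[OF B B1] by blast
  qed
qed

end
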